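(* Let $\{R_\gamma,\ \gamma\in J\}$ be an exponential family in general parametrization (see context). Assume there is $\kappa>0$ with $h(R_\gamma,R_{\gamma'})\le\kappa|\gamma-\gamma'|$ for all $\gamma,\gamma'\in J$, and that there is a compact interval $K\subset J$ of length $2\overline L>0$ and a constant $c_K>0$ with $h(R_\gamma,R_{\gamma'})\ge c_K|\gamma-\gamma'|$ for all $\gamma,\gamma'\in K$. Let $\alpha\in(0,1]$, $M>0$, and let $P_W$ be the uniform distribution on $[0,1]$. Then $$\mathcal R_n(\mathcal H_\alpha(M))\ge\frac{c_K^2}{48}\left[\left(\frac{3M^{1/\alpha}}{2^{2\alpha+4+1/\alpha}\kappa^2n}\right)^{\frac{2\alpha}{1+2\alpha}}\wedge\frac{M^2}{4}\wedge\overline L^2\right].$$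
   Context: Natural family: $\nu$ $\sigma$-finite on $\mathscr Y$, $S$ measurable not $\nu$-a.e. constant, $I$ interval with nonempty interior where $A(\theta)=\log\int e^{\theta S}d\nu<\infty$, $Q_\theta$ with $\nu$-density $e^{S(y)\theta-A(\theta)}$; general parametrization: $u:J\to I$ continuous strictly monotone onto a non-degenerate interval $J$, $R_\gamma=Q_{u(\gamma)}$. $h$ is the Hellinger distance $h^2(P,R)=\frac12\int(\sqrt p-\sqrt r)^2d\mu$. $\mathcal H_\alpha(M)$ is the set of $\gamma:[0,1]\to J$ with $|\gamma(x)-\gamma(y)|\le M|x-y|^\alpha$. Data: $X_i=(W_i,Y_i)$, $i\le n$, i.i.d., $W_i\sim P_W$, $Y_i\mid W_i=w\sim R_{\gamma^\star(w)}$. Minimax risk: $\mathcal R_n(\mathcal H_\alpha(M))=\inf_{\widetilde\gamma}\sup_{\gamma^\star\in\mathcal H_\alpha(M)}\mathbb E\big[h^2(R_{\gamma^\star},R_{\widetilde\gamma})\big]$ where the infimum is over all estimators $\widetilde\gamma$ (measurable functions of $X_1,\ldots,X_n$ with values in functions $[0,1]\to J$) and $h^2(R_\gamma,R_{\gamma'})=\int_0^1h^2(R_{\gamma(w)},R_{\gamma'(w)})dP_W(w)$. *)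

theory Defs
  imports "HOL-Probability.Probability"
begin

definition logpart :: "'y measure \<Rightarrow> ('y \<Rightarrow> real) \<Rightarrow> real \<Rightarrow> real" where
  "logpart \<nu> S \<theta> = ln (\<integral>y. exp (\<theta> * S y) \<partial>\<nu>)"

definition expdens :: "'y measure \<Rightarrow> ('y \<Rightarrow> real) \<Rightarrow> real \<Rightarrow> 'y \<Rightarrow> real" where
  "expdens \<nu> S \<theta> y = exp (S y * \<theta> - logpart \<nu> S \<theta>)"

definition hellinger :: "'y measure \<Rightarrow> ('y \<Rightarrow> real) \<Rightarrow> ('y \<Rightarrow> real) \<Rightarrow> real" where
  "hellinger \<mu> p r = sqrt ((1/2) * (\<integral>y. (sqrt (p y) - sqrt (r y))^2 \<partial>\<mu>))"

definition hR :: "'y measure \<Rightarrow> ('y \<Rightarrow> real) \<Rightarrow> (real \<Rightarrow> real) \<Rightarrow> real \<Rightarrow> real \<Rightarrow> real" where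
  "hR \<nu> S u a b = hellinger \<nu> (expdens \<nu> S (u a)) (expdens \<nu> S (u b))"

definition holder_class :: "real \<Rightarrow> real \<Rightarrow> real set \<Rightarrow> (real \<Rightarrow> real) set" where
  "holder_class \<alpha> M J = {\<gamma>. (\<forall>x\<in>{0..1}. \<gamma> x \<in> J) \<and>
      (\<forall>x\<in>{0..1}. \<forall>y\<in>{0..1}. \<bar>\<gamma> x - \<gamma> y\<bar> \<le> M * \<bar>x - y\<bar> powr \<alpha>)}"

definition PW :: "real measure" where
  "PW = uniform_measure lborel {0..1}"

definition obs_dist :: "'y measure \<Rightarrow> ('y \<Rightarrow> real) \<Rightarrow> (real \<Rightarrow> real) \<Rightarrow> (real \<Rightarrow> real) \<Rightarrow> (real \<times> 'y) measure" where
  "obs_dist \<nu> S u \<gamma> = density (PW \<Otimes>\<^sub>M \<nu>) (\<lambda>(w, y). ennreal (expdens \<nu> S (u (\<gamma> w)) y))"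

definition sample_dist :: "nat \<Rightarrow> 'y measure \<Rightarrow> ('y \<Rightarrow> real) \<Rightarrow> (real \<Rightarrow> real) \<Rightarrow> (real \<Rightarrow> real) \<Rightarrow> (nat \<Rightarrow> real \<times> 'y) measure" where
  "sample_dist n \<nu> S u \<gamma> = PiM {..<n} (\<lambda>_. obs_dist \<nu> S u \<gamma>)"

definition estimators :: "nat \<Rightarrow> 'y measure \<Rightarrow> real set \<Rightarrow> ((nat \<Rightarrow> real \<times> 'y) \<Rightarrow> real \<Rightarrow> real) set" where
  "estimators n \<nu> J = {\<gamma>t.
      (\<lambda>(x, w). \<gamma>t x w) \<in> borel_measurable (PiM {..<n} (\<lambda>_. (borel \<Otimes>\<^sub>M \<nu>)) \<Otimes>\<^sub>M borel) \<and>
      (\<forall>x\<in>space (PiM {..<n} (\<lambda>_. (borel \<Otimes>\<^sub>M \<nu>))). \<forall>w\<in>{0..1}. \<gamma>t x w \<in> J)}"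

definition risk :: "nat \<Rightarrow> 'y measure \<Rightarrow> ('y \<Rightarrow> real) \<Rightarrow> (real \<Rightarrow> real) \<Rightarrow> (real \<Rightarrow> real)
    \<Rightarrow> ((nat \<Rightarrow> real \<times> 'y) \<Rightarrow> real \<Rightarrow> real) \<Rightarrow> ennreal" where
  "risk n \<nu> S u \<gamma>s \<gamma>t =
     (\<integral>\<^sup>+ x. (\<integral>\<^sup>+ w. ennreal ((hR \<nu> S u (\<gamma>s w) (\<gamma>t x w))\<^sup>2) \<partial>PW) \<partial>(sample_dist n \<nu> S u \<gamma>s))"

definition minimax_risk :: "nat \<Rightarrow> 'y measure \<Rightarrow> ('y \<Rightarrow> real) \<Rightarrow> (real \<Rightarrow> real) \<Rightarrow> real set
    \<Rightarrow> real \<Rightarrow> real \<Rightarrow> ennreal" where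
  "minimax_risk n \<nu> S u J \<alpha> M =
     (INF \<gamma>t\<in>estimators n \<nu> J. SUP \<gamma>s\<in>holder_class \<alpha> M J. risk n \<nu> S u \<gamma>s \<gamma>t)"

end

theory Submission
  imports Defs
begin

text \<open>Assouad's cube. Split \<open>[0,1]\<close> into \<open>m\<close> cells and, for \<open>\<omega> \<subseteq> {..<m}\<close>, let \<open>\<gamma>\<^sub>\<omega>\<close> be the
  constant \<open>a\<close> plus a tent of height \<open>H\<close> on every cell \<open>j \<in> \<omega>\<close>; these functions lie in
  \<open>H\<^sub>\<alpha>(M)\<close> when \<open>H (2m)\<^sup>\<alpha> \<le> M\<close> and take values in \<open>K\<close>. Flipping one cell lowers the
  Hellinger affinity of a single observation by at most \<open>\<kappa>\<^sup>2 H\<^sup>2 / (3m)\<close>, so the two sample laws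
  still overlap by \<open>(1 - n \<kappa>\<^sup>2 H\<^sup>2 / (3m))\<^sup>2 / 2\<close> (Le Cam), while on that cell any estimate
  is, by the lower bound on \<open>K\<close>, at squared Hellinger distance at least \<open>c\<^sub>K\<^sup>2 H\<^sup>2 / (6m)\<close> from one
  of the two alternatives. Averaging over the cube bounds the risk below by
  \<open>c\<^sub>K\<^sup>2 H\<^sup>2 (1 - n \<kappa>\<^sup>2 H\<^sup>2 / (3m))\<^sup>2 / 24\<close>; taking \<open>H\<^sup>2\<close> equal to the minimum in the
  statement and \<open>m\<close> of order \<open>(M / H) powr (1 / \<alpha>)\<close> makes the Hellinger cost at most \<open>1/4\<close>.\<close>

lemma half_sq_diff_le_sum_sq:
  fixes x y t :: real
  shows "(x - y)^2 / 2 \<le> (x - t)^2 + (y - t)^2"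
proof -
  have "(x - t)^2 + (y - t)^2 - (x - y)^2 / 2 = (x + y - 2 * t)^2 / 2"
    by (simp add: power2_eq_square field_simps)
  moreover have "0 \<le> (x + y - 2 * t)^2" by simp
  ultimately show ?thesis by linarith
qed

lemma min_one_le_powr:
  fixes t \<alpha> :: real
  assumes "0 \<le> t" "0 < \<alpha>" "\<alpha> \<le> 1"
  shows "min 1 t \<le> t powr \<alpha>"
proof (cases "t \<le> 1")
  case True
  then have "t powr 1 \<le> t powr \<alpha>" using powr_mono'[of \<alpha> 1 t] assms by auto
  then show ?thesis using assms by auto
next
  case False
  then show ?thesis using ge_one_powr_ge_zero[of t \<alpha>] assms by auto
qed

lemma sum_Pow_pairs:
  assumes "j \<in> A" "finite A"
  shows "(\<Sum>X\<in>Pow A. F X) = (\<Sum>X\<in>Pow (A - {j}). F X + F (insert j X))"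
proof -
  have "A = insert j (A - {j})" using assms by auto
  then have "(\<Sum>X\<in>Pow A. F X) = (\<Sum>X\<in>Pow (A - {j}) \<union> insert j ` Pow (A - {j}). F X)"
    by (metis Pow_insert)
  also have "\<dots> = (\<Sum>X\<in>Pow (A - {j}). F X) + (\<Sum>X\<in>insert j ` Pow (A - {j}). F X)"
    by (rule sum.union_disjoint) (use assms in auto)
  also have "(\<Sum>X\<in>insert j ` Pow (A - {j}). F X) = (\<Sum>X\<in>Pow (A - {j}). F (insert j X))"
    by (rule sum.reindex_cong[of "insert j"]) (auto intro!: inj_onI simp: insert_ident)
  finally show ?thesis by (simp add: sum.distrib)
qed

lemma (in prob_space) one_minus_le_nn_integral:
  assumes [measurable]: "f \<in> borel_measurable M"
    and f_nonneg: "\<And>x. 0 \<le> f x" and f_integral: "(\<integral>\<^sup>+ x. ennreal (f x) \<partial>M) = ennreal c"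
    and c_nonneg: "0 \<le> c"
  shows "ennreal (1 - c) \<le> (\<integral>\<^sup>+ x. ennreal (1 - f x) \<partial>M)"
proof -
  have "1 = (\<integral>\<^sup>+ x. 1 \<partial>M)" by (simp add: emeasure_space_1)
  also have "\<dots> \<le> (\<integral>\<^sup>+ x. ennreal (1 - f x) + ennreal (f x) \<partial>M)"
  proof (rule nn_integral_mono)
    fix x
    show "1 \<le> ennreal (1 - f x) + ennreal (f x)"
    proof (cases "f x \<le> 1")
      case True
      then show ?thesis using f_nonneg[of x] by (simp flip: ennreal_plus)
    next
      case False
      then have "1 \<le> ennreal (f x)" by (simp flip: ennreal_1)
      then show ?thesis by (simp add: add_increasing)
    qed
  qed
  also have "\<dots> = (\<integral>\<^sup>+ x. ennreal (1 - f x) \<partial>M) + ennreal c"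
    by (simp add: nn_integral_add f_integral)
  finally have "1 \<le> (\<integral>\<^sup>+ x. ennreal (1 - f x) \<partial>M) + ennreal c" .
  then show ?thesis
  proof (cases "(\<integral>\<^sup>+ x. ennreal (1 - f x) \<partial>M)")
    case (real r)
    then have "ennreal 1 \<le> ennreal (r + c)" using \<open>1 \<le> _ + ennreal c\<close> c_nonneg by (simp add: ennreal_plus)
    then have "1 - c \<le> r" using real c_nonneg by (subst (asm) ennreal_le_iff) auto
    then show ?thesis using real by (simp add: ennreal_leI)
  qed simp
qed

text \<open>Le Cam's inequality: Cauchy--Schwarz applied to
  \<open>sqrt (p * q) = sqrt (min p q) * sqrt (max p q)\<close>, with \<open>max p q \<le> p + q\<close>.\<close>
lemma affinity_sq_le_twice_overlap:
  fixes p q :: "'a \<Rightarrow> real"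
  assumes [measurable]: "p \<in> borel_measurable N" "q \<in> borel_measurable N"
    and nonneg: "\<And>x. 0 \<le> p x" "\<And>x. 0 \<le> q x"
    and p_le: "(\<integral>\<^sup>+ x. ennreal (p x) \<partial>N) \<le> 1" and q_le: "(\<integral>\<^sup>+ x. ennreal (q x) \<partial>N) \<le> 1"
  shows "(\<integral>\<^sup>+ x. ennreal (sqrt (p x * q x)) \<partial>N)^2 \<le> 2 * (\<integral>\<^sup>+ x. ennreal (min (p x) (q x)) \<partial>N)"
proof -
  have split: "ennreal (sqrt (p x * q x)) =
      ennreal (sqrt (min (p x) (q x))) * ennreal (sqrt (max (p x) (q x)))" for x
    using nonneg[of x] by (simp add: min_def max_def mult.commute real_sqrt_mult ennreal_mult)
  have sq: "ennreal (sqrt (min (p x) (q x))) ^ 2 = ennreal (min (p x) (q x))"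
    "ennreal (sqrt (max (p x) (q x))) ^ 2 = ennreal (max (p x) (q x))" for x
    using nonneg[of x] by (simp_all add: ennreal_power)
  have "(\<integral>\<^sup>+ x. ennreal (sqrt (p x * q x)) \<partial>N)^2
      \<le> (\<integral>\<^sup>+ x. ennreal (sqrt (min (p x) (q x))) ^ 2 \<partial>N) *
        (\<integral>\<^sup>+ x. ennreal (sqrt (max (p x) (q x))) ^ 2 \<partial>N)"
    unfolding split by (rule Cauchy_Schwarz_nn_integral) measurable
  also have "\<dots> = (\<integral>\<^sup>+ x. ennreal (min (p x) (q x)) \<partial>N) * (\<integral>\<^sup>+ x. ennreal (max (p x) (q x)) \<partial>N)"
    by (simp add: sq)
  also have "\<dots> \<le> (\<integral>\<^sup>+ x. ennreal (min (p x) (q x)) \<partial>N) * 2"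
  proof (rule mult_left_mono)
    have "(\<integral>\<^sup>+ x. ennreal (max (p x) (q x)) \<partial>N) \<le>
        (\<integral>\<^sup>+ x. ennreal (p x) \<partial>N) + (\<integral>\<^sup>+ x. ennreal (q x) \<partial>N)"
      using nonneg by (auto simp flip: nn_integral_add intro!: nn_integral_mono ennreal_leI simp: max_def)
    also have "\<dots> \<le> 2"
      using add_mono[OF p_le q_le] by simp
    finally show "(\<integral>\<^sup>+ x. ennreal (max (p x) (q x)) \<partial>N) \<le> 2" .
  qed simp
  finally show ?thesis
    by (simp add: mult.commute)
qed

text \<open>Assouad's averaging over the cube \<open>Pow {..<m}\<close>: each coordinate \<open>j\<close> splits the cube into
  \<open>2^(m-1)\<close> pairs \<open>\<omega>, insert j \<omega>\<close>.\<close>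
lemma cube_averaging:
  fixes E :: "nat \<Rightarrow> nat set \<Rightarrow> ennreal"
  assumes pair: "\<And>j \<omega>. j < m \<Longrightarrow> \<omega> \<subseteq> {..<m} - {j} \<Longrightarrow> W \<le> E j \<omega> + E j (insert j \<omega>)"
    and total: "\<And>\<omega>. \<omega> \<subseteq> {..<m} \<Longrightarrow> (\<Sum>j<m. E j \<omega>) \<le> V"
  shows "of_nat m * W \<le> 2 * V"
proof (cases "m = 0")
  case False
  have per_coordinate: "of_nat (2^(m-1)) * W \<le> (\<Sum>\<omega>\<in>Pow {..<m}. E j \<omega>)" if "j < m" for j
  proof -
    have "of_nat (2^(m-1)) * W = (\<Sum>\<omega>\<in>Pow ({..<m} - {j}). W)"
      using that by (simp add: card_Pow)
    also have "\<dots> \<le> (\<Sum>\<omega>\<in>Pow ({..<m} - {j}). E j \<omega> + E j (insert j \<omega>))"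
      using that by (intro sum_mono pair) auto
    also have "\<dots> = (\<Sum>\<omega>\<in>Pow {..<m}. E j \<omega>)"
      using that by (simp add: sum_Pow_pairs)
    finally show ?thesis .
  qed
  have "of_nat (2^(m-1)) * (of_nat m * W) = (\<Sum>j<m. of_nat (2^(m-1)) * W)"
    by (simp add: ac_simps)
  also have "\<dots> \<le> (\<Sum>j<m. \<Sum>\<omega>\<in>Pow {..<m}. E j \<omega>)"
    by (intro sum_mono per_coordinate) auto
  also have "\<dots> = (\<Sum>\<omega>\<in>Pow {..<m}. \<Sum>j<m. E j \<omega>)"
    by (rule sum.swap)
  also have "\<dots> \<le> (\<Sum>\<omega>\<in>Pow {..<m}. V)"
    by (intro sum_mono total) auto
  also have "\<dots> = of_nat (2^m) * V"
    by (simp add: card_Pow)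
  also have "\<dots> = of_nat (2^(m-1)) * (2 * V)"
    using False by (cases m) (simp_all add: mult_ac)
  finally have "of_nat (2^(m-1)) * (of_nat m * W) \<le> of_nat (2^(m-1)) * (2 * V)" .
  moreover have "of_nat (2^(m-1)) \<noteq> (0::ennreal)" "of_nat (2^(m-1)) \<noteq> (\<top>::ennreal)"
    by (simp_all add: power_eq_top_ennreal)
  ultimately show ?thesis
    using ennreal_mult_le_mult_iff by blast
qed simp

lemma indicator_PiE_eq_prod:
  assumes "x \<in> extensional I" "finite I"
  shows "(indicator (Pi\<^sub>E I A) x :: ennreal) = (\<Prod>i\<in>I. indicator (A i) (x i))"
proof (cases "x \<in> Pi\<^sub>E I A")
  case False
  then obtain i where "i \<in> I" "x i \<notin> A i" using assms by (auto simp: PiE_iff)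
  then show ?thesis using False assms by (auto intro!: prod_zero bexI[of _ i])
qed (auto simp: PiE_iff)

lemma PiM_density:
  fixes B :: "'a measure" and f :: "'a \<Rightarrow> ennreal"
  assumes "sigma_finite_measure B" and [measurable]: "f \<in> borel_measurable B"
    and "prob_space (density B f)" and "finite I"
  shows "PiM I (\<lambda>_. density B f) = density (PiM I (\<lambda>_. B)) (\<lambda>x. \<Prod>i\<in>I. f (x i))"
proof -
  interpret P: product_sigma_finite "\<lambda>_. density B f"
    unfolding product_sigma_finite_def using assms(3) prob_space_imp_sigma_finite by blast
  interpret PB: product_sigma_finite "\<lambda>_. B"
    unfolding product_sigma_finite_def using assms(1) by blast
  have sets_eq: "sets (PiM I (\<lambda>_. B)) = sets (PiM I (\<lambda>_. density B f))"
    by (rule sets_PiM_cong) auto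
  have "density (PiM I (\<lambda>_. B)) (\<lambda>x. \<Prod>i\<in>I. f (x i)) = PiM I (\<lambda>_. density B f)"
  proof (rule P.PiM_eqI[OF \<open>finite I\<close>])
    fix A assume "\<And>i. i \<in> I \<Longrightarrow> A i \<in> sets (density B f)"
    then have A: "\<And>i. i \<in> I \<Longrightarrow> A i \<in> sets B" by simp
    have "Pi\<^sub>E I A \<in> sets (PiM I (\<lambda>_. B))"
      using A \<open>finite I\<close> by (intro sets_PiM_I_finite) auto
    then have "emeasure (density (PiM I (\<lambda>_. B)) (\<lambda>x. \<Prod>i\<in>I. f (x i))) (Pi\<^sub>E I A)
        = (\<integral>\<^sup>+ x. (\<Prod>i\<in>I. f (x i)) * indicator (Pi\<^sub>E I A) x \<partial>PiM I (\<lambda>_. B))"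
      using \<open>finite I\<close> by (intro emeasure_density) (auto intro!: borel_measurable_prod_ennreal)
    also have "\<dots> = (\<integral>\<^sup>+ x. (\<Prod>i\<in>I. f (x i) * indicator (A i) (x i)) \<partial>PiM I (\<lambda>_. B))"
    proof (rule nn_integral_cong)
      fix x assume "x \<in> space (PiM I (\<lambda>_. B))"
      then have "x \<in> extensional I" by (simp add: space_PiM PiE_def)
      then show "(\<Prod>i\<in>I. f (x i)) * indicator (Pi\<^sub>E I A) x = (\<Prod>i\<in>I. f (x i) * indicator (A i) (x i))"
        using \<open>finite I\<close> by (simp add: indicator_PiE_eq_prod prod.distrib)
    qed
    also have "\<dots> = (\<Prod>i\<in>I. \<integral>\<^sup>+ y. f y * indicator (A i) y \<partial>B)"
      using \<open>finite I\<close> A by (intro PB.product_nn_integral_prod) auto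
    also have "\<dots> = (\<Prod>i\<in>I. emeasure (density B f) (A i))"
      using A by (intro prod.cong refl) (simp add: emeasure_density)
    finally show "emeasure (density (PiM I (\<lambda>_. B)) (\<lambda>x. \<Prod>i\<in>I. f (x i))) (Pi\<^sub>E I A) =
        (\<Prod>i\<in>I. emeasure (density B f) (A i))" .
  qed (use sets_eq in simp)
  then show ?thesis by simp
qed

section \<open>Hellinger distance\<close>

lemma integrable_sqrt_mult:
  fixes p q :: "'a \<Rightarrow> real"
  assumes "integrable \<mu> p" "integrable \<mu> q" "\<And>y. 0 \<le> p y" "\<And>y. 0 \<le> q y"
  shows "integrable \<mu> (\<lambda>y. sqrt (p y * q y))"
proof (rule Bochner_Integration.integrable_bound)
  show "integrable \<mu> (\<lambda>y. p y + q y)" using assms by auto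
  show "(\<lambda>y. sqrt (p y * q y)) \<in> borel_measurable \<mu>" using assms by measurable
  show "AE y in \<mu>. norm (sqrt (p y * q y)) \<le> norm (p y + q y)"
  proof (rule AE_I2)
    fix y
    have "sqrt (p y * q y) \<le> (p y + q y) / 2"
      by (rule arith_geo_mean_sqrt) (use assms in auto)
    then show "norm (sqrt (p y * q y)) \<le> norm (p y + q y)" using assms(3,4)[of y] by simp
  qed
qed

lemma sqrt_diff_sq_eq:
  fixes r s :: real
  assumes "0 \<le> r" "0 \<le> s"
  shows "(sqrt r - sqrt s)^2 = r + s - 2 * sqrt (r * s)"
  using assms by (simp add: power2_eq_square algebra_simps real_sqrt_mult)

lemma integrable_sqrt_diff_sq:
  fixes p q :: "'a \<Rightarrow> real"
  assumes "integrable \<mu> p" "integrable \<mu> q" "\<And>y. 0 \<le> p y" "\<And>y. 0 \<le> q y"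
  shows "integrable \<mu> (\<lambda>y. (sqrt (p y) - sqrt (q y))^2)"
  using assms integrable_sqrt_mult[OF assms] by (simp add: sqrt_diff_sq_eq)

lemma hellinger_sq: "(hellinger \<mu> p q)^2 = (\<integral>y. (sqrt (p y) - sqrt (q y))^2 \<partial>\<mu>) / 2"
proof -
  have "0 \<le> (\<integral>y. (sqrt (p y) - sqrt (q y))^2 \<partial>\<mu>)" by (rule integral_nonneg_AE) auto
  then show ?thesis unfolding hellinger_def by simp
qed

lemma hellinger_sq_eq_one_minus_affinity:
  fixes p q :: "'a \<Rightarrow> real"
  assumes "integrable \<mu> p" "integrable \<mu> q" "\<And>y. 0 \<le> p y" "\<And>y. 0 \<le> q y"
    and "(\<integral>y. p y \<partial>\<mu>) = 1" "(\<integral>y. q y \<partial>\<mu>) = 1"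
  shows "(hellinger \<mu> p q)^2 = 1 - (\<integral>y. sqrt (p y * q y) \<partial>\<mu>)"
  unfolding hellinger_sq using assms integrable_sqrt_mult[OF assms(1-4)]
  by (simp add: sqrt_diff_sq_eq)

lemma hellinger_sq_quasi_triangle:
  fixes p q r :: "'a \<Rightarrow> real"
  assumes "integrable \<mu> p" "integrable \<mu> q" "integrable \<mu> r"
    and "\<And>y. 0 \<le> p y" "\<And>y. 0 \<le> q y" "\<And>y. 0 \<le> r y"
  shows "(hellinger \<mu> p q)^2 / 2 \<le> (hellinger \<mu> p r)^2 + (hellinger \<mu> q r)^2"
proof -
  have pq: "integrable \<mu> (\<lambda>y. (sqrt (p y) - sqrt (q y))^2)"
    and pr: "integrable \<mu> (\<lambda>y. (sqrt (p y) - sqrt (r y))^2)"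
    and qr: "integrable \<mu> (\<lambda>y. (sqrt (q y) - sqrt (r y))^2)"
    using assms by (auto intro: integrable_sqrt_diff_sq)
  have "(\<integral>y. (sqrt (p y) - sqrt (q y))^2 / 2 \<partial>\<mu>) \<le>
      (\<integral>y. (sqrt (p y) - sqrt (r y))^2 + (sqrt (q y) - sqrt (r y))^2 \<partial>\<mu>)"
  proof (rule integral_mono)
    fix y
    show "(sqrt (p y) - sqrt (q y))^2 / 2 \<le> (sqrt (p y) - sqrt (r y))^2 + (sqrt (q y) - sqrt (r y))^2"
      by (rule half_sq_diff_le_sum_sq)
  qed (use pq pr qr in auto)
  then show ?thesis unfolding hellinger_sq using pq pr qr by simp
qed

section \<open>Exponential families\<close>

lemma expdens_pos: "0 < expdens \<nu> S \<theta> y"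
  unfolding expdens_def by simp

locale exp_family =
  fixes \<nu> :: "'y measure" and S :: "'y \<Rightarrow> real" and I :: "real set"
  assumes sigma_finite: "sigma_finite_measure \<nu>"
    and S_measurable[measurable]: "S \<in> borel_measurable \<nu>"
    and S_not_AE_const: "\<not> (\<exists>c. AE y in \<nu>. S y = c)"
    and integrable_exp: "\<forall>\<theta>\<in>I. integrable \<nu> (\<lambda>y. exp (\<theta> * S y))"
begin

interpretation sigma_finite_measure \<nu> by (rule sigma_finite)

text \<open>The integrand is positive, so the integral could only vanish for the null measure; this is
  what the non-degeneracy of \<open>S\<close> is needed for.\<close>
lemma partition_pos:
  assumes "\<theta> \<in> I" shows "0 < (\<integral>y. exp (\<theta> * S y) \<partial>\<nu>)"
proof -
  have int: "integrable \<nu> (\<lambda>y. exp (\<theta> * S y))" using integrable_exp assms by auto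
  have "0 \<le> (\<integral>y. exp (\<theta> * S y) \<partial>\<nu>)" by (rule integral_nonneg_AE) auto
  moreover have "(\<integral>y. exp (\<theta> * S y) \<partial>\<nu>) \<noteq> 0"
  proof
    assume "(\<integral>y. exp (\<theta> * S y) \<partial>\<nu>) = 0"
    then have "AE y in \<nu>. exp (\<theta> * S y) = 0"
      using integral_nonneg_eq_0_iff_AE[OF int] by auto
    then have "AE y in \<nu>. S y = 0" by (rule AE_mp) auto
    then show False using S_not_AE_const by blast
  qed
  ultimately show ?thesis by linarith
qed

lemma expdens_eq:
  assumes "\<theta> \<in> I"
  shows "expdens \<nu> S \<theta> = (\<lambda>y. exp (\<theta> * S y) / (\<integral>y. exp (\<theta> * S y) \<partial>\<nu>))"
  using partition_pos[OF assms] unfolding expdens_def logpart_def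
  by (simp add: exp_diff mult.commute fun_eq_iff)

lemma integrable_expdens:
  assumes "\<theta> \<in> I" shows "integrable \<nu> (expdens \<nu> S \<theta>)"
  using integrable_exp assms by (simp add: expdens_eq)

lemma integral_expdens:
  assumes "\<theta> \<in> I" shows "(\<integral>y. expdens \<nu> S \<theta> y \<partial>\<nu>) = 1"
  using partition_pos[OF assms] by (simp add: expdens_eq[OF assms])

lemma nn_integral_expdens:
  assumes "\<theta> \<in> I" shows "(\<integral>\<^sup>+ y. ennreal (expdens \<nu> S \<theta> y) \<partial>\<nu>) = 1"
  using nn_integral_eq_integral[OF integrable_expdens[OF assms]] integral_expdens[OF assms]
  by (simp add: less_imp_le[OF expdens_pos])

lemma borel_measurable_expdens_pair[measurable]:
  "(\<lambda>(\<theta>, y). expdens \<nu> S \<theta> y) \<in> borel_measurable (borel \<Otimes>\<^sub>M \<nu>)"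
proof -
  have "(\<lambda>\<theta>. \<integral>y. exp (\<theta> * S y) \<partial>\<nu>) \<in> borel_measurable borel"
    by (rule borel_measurable_lebesgue_integral) measurable
  then have [measurable]: "logpart \<nu> S \<in> borel_measurable borel"
    unfolding logpart_def[abs_def] by measurable
  show ?thesis unfolding expdens_def by measurable
qed

lemma borel_measurable_hellinger_sq_pair[measurable]:
  "(\<lambda>(\<theta>, \<theta>'). (hellinger \<nu> (expdens \<nu> S \<theta>) (expdens \<nu> S \<theta>'))^2) \<in> borel_measurable (borel \<Otimes>\<^sub>M borel)"
proof -
  have "(\<lambda>\<theta>\<theta>'. \<integral>y. (sqrt (expdens \<nu> S (fst \<theta>\<theta>') y) - sqrt (expdens \<nu> S (snd \<theta>\<theta>') y))^2 \<partial>\<nu>)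
      \<in> borel_measurable (borel \<Otimes>\<^sub>M borel)"
    by (rule borel_measurable_lebesgue_integral) measurable
  then show ?thesis unfolding hellinger_sq by (simp add: case_prod_beta')
qed

lemma hellinger_sq_expdens_eq_one_minus_affinity:
  assumes "\<theta> \<in> I" "\<theta>' \<in> I"
  shows "(hellinger \<nu> (expdens \<nu> S \<theta>) (expdens \<nu> S \<theta>'))^2
    = 1 - (\<integral>y. sqrt (expdens \<nu> S \<theta> y * expdens \<nu> S \<theta>' y) \<partial>\<nu>)"
  using assms by (intro hellinger_sq_eq_one_minus_affinity)
    (auto intro: integrable_expdens integral_expdens less_imp_le[OF expdens_pos])

lemma hellinger_sq_expdens_quasi_triangle:
  assumes "\<theta> \<in> I" "\<theta>' \<in> I" "\<theta>'' \<in> I"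
  shows "(hellinger \<nu> (expdens \<nu> S \<theta>) (expdens \<nu> S \<theta>'))^2 / 2
    \<le> (hellinger \<nu> (expdens \<nu> S \<theta>) (expdens \<nu> S \<theta>''))^2
      + (hellinger \<nu> (expdens \<nu> S \<theta>') (expdens \<nu> S \<theta>''))^2"
  using assms by (intro hellinger_sq_quasi_triangle)
    (auto intro: integrable_expdens less_imp_le[OF expdens_pos])

end

section \<open>Tents\<close>

definition tent :: "real \<Rightarrow> real" where
  "tent z = min (frac z) (1 - frac z)"

lemma borel_measurable_tent[measurable]: "tent \<in> borel_measurable borel"
  unfolding tent_def frac_def by measurable

lemma tent_nonneg: "0 \<le> tent z"
  unfolding tent_def using frac_lt_1[of z] by (simp add: frac_ge_0)

lemma tent_le_half: "tent z \<le> 1/2"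
  unfolding tent_def by linarith

lemma tent_lipschitz_same_cell:
  assumes "\<lfloor>z\<rfloor> = \<lfloor>s\<rfloor>" shows "\<bar>tent z - tent s\<bar> \<le> \<bar>z - s\<bar>"
  unfolding tent_def frac_def using assms by (auto simp: min_def abs_if)

lemma tent_le_dist_other_cell:
  assumes "\<lfloor>z\<rfloor> \<noteq> \<lfloor>s\<rfloor>" shows "tent z \<le> \<bar>z - s\<bar>"
proof -
  have "tent z \<le> frac z" "tent z \<le> 1 - frac z" unfolding tent_def by auto
  moreover have "of_int \<lfloor>z\<rfloor> + 1 \<le> s \<or> s < of_int \<lfloor>z\<rfloor>"
    using assms by linarith
  ultimately show ?thesis unfolding frac_def by linarith
qed

definition bumps :: "real \<Rightarrow> real \<Rightarrow> nat set \<Rightarrow> real \<Rightarrow> real" where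
  "bumps m H \<omega> w = (if \<lfloor>m * w\<rfloor> \<in> int ` \<omega> then 2 * H * tent (m * w) else 0)"

lemma bumps_nonneg: "0 \<le> H \<Longrightarrow> 0 \<le> bumps m H \<omega> w"
  unfolding bumps_def using tent_nonneg by auto

lemma bumps_le:
  assumes "0 \<le> H" shows "bumps m H \<omega> w \<le> H"
proof -
  have "H * (2 * tent (m * w)) \<le> H * 1"
    using tent_le_half[of "m * w"] assms by (intro mult_left_mono) auto
  then show ?thesis unfolding bumps_def using assms by auto
qed

lemma bumps_lipschitz:
  assumes "0 \<le> H" "0 \<le> m"
  shows "\<bar>bumps m H \<omega> x - bumps m H \<omega> y\<bar> \<le> 2 * H * (m * \<bar>x - y\<bar>)"
proof -
  have "\<bar>m * x - m * y\<bar> = \<bar>m\<bar> * \<bar>x - y\<bar>"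
    by (simp add: abs_mult[symmetric] right_diff_distrib)
  then have dist: "m * \<bar>x - y\<bar> = \<bar>m * x - m * y\<bar>"
    using assms(2) by simp
  show ?thesis
  proof (cases "\<lfloor>m * x\<rfloor> = \<lfloor>m * y\<rfloor>")
    case True
    then have "2 * H * \<bar>tent (m * x) - tent (m * y)\<bar> \<le> 2 * H * \<bar>m * x - m * y\<bar>"
      using assms(1) by (intro mult_left_mono tent_lipschitz_same_cell) auto
    then show ?thesis unfolding bumps_def dist using True assms(1)
      by (auto simp: abs_mult right_diff_distrib[symmetric])
  next
    case False
    then have "tent (m * x) \<le> \<bar>m * x - m * y\<bar>" "tent (m * y) \<le> \<bar>m * x - m * y\<bar>"
      using tent_le_dist_other_cell[of "m * x" "m * y"] tent_le_dist_other_cell[of "m * y" "m * x"]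
      by (auto simp: abs_minus_commute)
    then have "2 * H * tent (m * x) \<le> 2 * H * \<bar>m * x - m * y\<bar>"
        "2 * H * tent (m * y) \<le> 2 * H * \<bar>m * x - m * y\<bar>"
      using assms(1) by (auto intro: mult_left_mono)
    moreover have "0 \<le> 2 * H * tent (m * x)" "0 \<le> 2 * H * tent (m * y)"
      using assms(1) tent_nonneg by auto
    ultimately show ?thesis unfolding bumps_def dist by auto
  qed
qed

text \<open>Interpolates between the Lipschitz bound at small distances and the bound \<open>H\<close> at large ones.\<close>
lemma bumps_holder:
  assumes "0 \<le> H" "0 < m" "0 < \<alpha>" "\<alpha> \<le> 1" and height: "H * (2 * m) powr \<alpha> \<le> M"
  shows "\<bar>bumps m H \<omega> x - bumps m H \<omega> y\<bar> \<le> M * \<bar>x - y\<bar> powr \<alpha>"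
proof -
  let ?t = "2 * m * \<bar>x - y\<bar>"
  have "\<bar>bumps m H \<omega> x - bumps m H \<omega> y\<bar> \<le> H * ?t"
    using bumps_lipschitz[OF assms(1), of m \<omega> x y] assms(2) by (simp add: mult.assoc)
  moreover have "\<bar>bumps m H \<omega> x - bumps m H \<omega> y\<bar> \<le> H"
    using bumps_nonneg[OF assms(1), of m \<omega> x] bumps_le[OF assms(1), of m \<omega> x]
      bumps_nonneg[OF assms(1), of m \<omega> y] bumps_le[OF assms(1), of m \<omega> y]
    unfolding abs_le_iff by linarith
  ultimately have "\<bar>bumps m H \<omega> x - bumps m H \<omega> y\<bar> \<le> H * min 1 ?t"
    by (auto simp: min_def)
  also have "\<dots> \<le> H * ?t powr \<alpha>"
    using min_one_le_powr[of ?t \<alpha>] assms by (intro mult_left_mono) auto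
  also have "\<dots> = H * (2 * m) powr \<alpha> * \<bar>x - y\<bar> powr \<alpha>"
    using assms(2) by (simp add: powr_mult)
  also have "\<dots> \<le> M * \<bar>x - y\<bar> powr \<alpha>"
    using height by (intro mult_right_mono) auto
  finally show ?thesis .
qed

lemma has_integral_sq_affine:
  fixes m c d :: real
  assumes "lo \<le> hi"
  shows "((\<lambda>w. 3 * c * m * (m * w - d)^2) has_integral (c * (m * hi - d)^3 - c * (m * lo - d)^3)) {lo..hi}"
proof -
  have "((\<lambda>w. c * (m * w - d)^3) has_real_derivative 3 * c * m * (m * x - d)^2) (at x within {lo..hi})" for x
    by (auto intro!: derivative_eq_intros simp: power2_eq_square)
  then show ?thesis
    using fundamental_theorem_of_calculus[OF assms, of "\<lambda>w. c * (m * w - d)^3"]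
    by (simp add: has_real_derivative_iff_has_vector_derivative)
qed

lemma tent_eq_rising:
  assumes "of_int k \<le> z" "z \<le> of_int k + 1/2" shows "tent z = z - of_int k"
proof -
  have "\<lfloor>z\<rfloor> = k" using assms by (simp add: floor_eq_iff)
  then show ?thesis using assms unfolding tent_def frac_def by simp
qed

lemma tent_eq_falling:
  assumes "of_int k + 1/2 \<le> z" "z \<le> of_int k + 1" shows "tent z = of_int k + 1 - z"
proof (cases "z = of_int k + 1")
  case True
  then have "frac z = 0" by (simp add: frac_def)
  then show ?thesis using True unfolding tent_def by simp
next
  case False
  then have "\<lfloor>z\<rfloor> = k" using assms by (simp add: floor_eq_iff)
  then show ?thesis using assms unfolding tent_def frac_def by simp
qed

lemma nn_integral_tent_sq_cell:
  fixes m H :: real and j :: nat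
  assumes m: "0 < m"
  shows "(\<integral>\<^sup>+ w. ennreal (indicator {w. \<lfloor>m * w\<rfloor> = int j} w * (2 * H * tent (m * w))^2) \<partial>lborel)
         = ennreal (H^2 / (3 * m))"
proof -
  define lo where "lo = real j / m"
  define mid where "mid = (real j + 1/2) / m"
  define hi where "hi = (real j + 1) / m"
  have lm: "lo \<le> mid" "mid \<le> hi" using m unfolding lo_def mid_def hi_def by (auto simp: divide_right_mono)
  let ?f = "\<lambda>w. (2 * H * tent (m * w))^2"
  have left: "(?f has_integral (H^2 / (6 * m))) {lo..mid}"
  proof (rule has_integral_eq_rhs[OF has_integral_eq[OF _ has_integral_sq_affine[OF lm(1), of "4 * H^2 / (3 * m)" m "real j"]]])
    fix w assume "w \<in> {lo..mid}"
    then have "real j \<le> m * w" "m * w \<le> real j + 1/2"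
      using m unfolding lo_def mid_def by (auto simp: field_simps)
    then have tent: "tent (m * w) = m * w - real j"
      using tent_eq_rising[of "int j" "m * w"] by simp
    show "3 * (4 * H^2 / (3 * m)) * m * (m * w - real j)^2 = ?f w"
      unfolding tent using m by (simp add: power2_eq_square field_simps)
  next
    show "H^2 / (6 * m) = 4 * H^2 / (3 * m) * (m * mid - real j)^3 - 4 * H^2 / (3 * m) * (m * lo - real j)^3"
      using m unfolding mid_def lo_def by (simp add: field_simps power3_eq_cube)
  qed
  have right: "(?f has_integral (H^2 / (6 * m))) {mid..hi}"
  proof (rule has_integral_eq_rhs[OF has_integral_eq[OF _ has_integral_sq_affine[OF lm(2), of "- 4 * H^2 / (3 * m)" "- m" "- real j - 1"]]])
    fix w assume "w \<in> {mid..hi}"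
    then have "real j + 1/2 \<le> m * w" "m * w \<le> real j + 1"
      using m unfolding mid_def hi_def by (auto simp: field_simps)
    then have tent: "tent (m * w) = real j + 1 - m * w"
      using tent_eq_falling[of "int j" "m * w"] by simp
    show "3 * (- 4 * H^2 / (3 * m)) * (- m) * ((- m) * w - (- real j - 1))^2 = ?f w"
      unfolding tent using m by (simp add: power2_eq_square field_simps)
  next
    show "H^2 / (6 * m) = - 4 * H^2 / (3 * m) * ((- m) * hi - (- real j - 1))^3
        - (- 4 * H^2 / (3 * m)) * ((- m) * mid - (- real j - 1))^3"
      using m unfolding mid_def hi_def by (simp add: field_simps power3_eq_cube)
  qed
  have integral: "(\<integral>\<^sup>+ w. ennreal (indicator {lo..hi} w * ?f w) \<partial>lborel) = ennreal (H^2 / (3 * m))"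
    using has_integral_combine[OF lm left right] by (intro nn_integral_has_integral_lebesgue) simp_all
  have "m * hi = real j + 1" using m unfolding hi_def by simp
  then have tent_hi: "tent (m * hi) = 0" using tent_eq_falling[of "int j" "m * hi"] by simp
  have same: "indicator {w. \<lfloor>m * w\<rfloor> = int j} w * ?f w = indicator {lo..hi} w * ?f w" for w
  proof -
    have "\<lfloor>m * w\<rfloor> = int j \<longleftrightarrow> lo \<le> w \<and> w < hi"
      using m unfolding lo_def hi_def by (simp add: floor_eq_iff field_simps)
    then show ?thesis using tent_hi lm by (cases "w = hi") (auto simp: indicator_def)
  qed
  show ?thesis unfolding same by (rule integral)
qed

section \<open>Choice of the cube\<close>

lemma cube_scale_bounds:
  fixes M A \<kappa> \<alpha> :: real and n :: nat
  assumes M: "0 < M" and \<alpha>: "0 < \<alpha>" "\<alpha> \<le> 1" and n: "0 < n" and A: "0 < A"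
    and A_le_rate: "A \<le> (3 * M powr (1 / \<alpha>) / (2 powr (2 * \<alpha> + 4 + 1 / \<alpha>) * \<kappa>^2 * real n))
                        powr (2 * \<alpha> / (1 + 2 * \<alpha>))"
    and A_le_M: "A \<le> M^2 / 4"
  defines "t \<equiv> (A / M^2) powr (1 / (2 * \<alpha>))"
  shows "0 < t" "t \<le> 1/2" "t powr \<alpha> = sqrt A / M" "real n * \<kappa>^2 * (A * t) \<le> 3/16"
proof -
  define Q where "Q = 3 * M powr (1 / \<alpha>) / (2 powr (2 * \<alpha> + 4 + 1 / \<alpha>) * \<kappa>^2 * real n)"
  have "Q \<noteq> 0" using A A_le_rate unfolding Q_def[symmetric] by auto
  then have Q: "0 < Q" and \<kappa>: "\<kappa> \<noteq> 0" unfolding Q_def using M by auto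
  define e where "e = 1 / (2 * \<alpha>)"
  have e: "0 < e" unfolding e_def using \<alpha> by simp
  show "0 < t" unfolding t_def using A M by simp
  have "t \<le> (1/4) powr e" unfolding t_def e_def[symmetric] using A_le_M A M e
    by (intro powr_mono2) (simp_all add: field_simps)
  also have "(1/4::real) powr e = ((1/2) powr 2) powr e" by (simp add: powr_numeral power2_eq_square)
  also have "\<dots> = (1/2) powr (1 / \<alpha>)" unfolding powr_powr e_def using \<alpha> by simp
  also have "\<dots> \<le> (1/2) powr 1" using \<alpha> by (intro powr_mono') (auto simp: field_simps)
  finally show "t \<le> 1/2" by simp
  show "t powr \<alpha> = sqrt A / M"
    unfolding t_def powr_powr using \<alpha> A M by (simp add: powr_half_sqrt real_sqrt_divide)
  have "(M^2) powr e = (M powr 2) powr e" using M by (simp add: powr_realpow)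
  also have "\<dots> = M powr (1 / \<alpha>)" unfolding powr_powr e_def using \<alpha> by simp
  finally have "t = A powr e / M powr (1 / \<alpha>)"
    unfolding t_def e_def[symmetric] using A M by (simp add: powr_divide)
  then have "A * t = A powr (1 + e) / M powr (1 / \<alpha>)" using A by (simp add: powr_add)
  also have "\<dots> \<le> Q / M powr (1 / \<alpha>)"
  proof (rule divide_right_mono)
    have "1 + e = (1 + 2 * \<alpha>) / (2 * \<alpha>)" unfolding e_def using \<alpha> by (simp add: field_simps)
    moreover have "1 + 2 * \<alpha> \<noteq> 0" using \<alpha> by simp
    ultimately have exponent: "(2 * \<alpha> / (1 + 2 * \<alpha>)) * (1 + e) = 1" using \<alpha> by simp
    have "(Q powr (2 * \<alpha> / (1 + 2 * \<alpha>))) powr (1 + e) = Q"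
      unfolding powr_powr exponent using Q by simp
    moreover have "A powr (1 + e) \<le> (Q powr (2 * \<alpha> / (1 + 2 * \<alpha>))) powr (1 + e)"
      using A_le_rate A e unfolding Q_def[symmetric] by (intro powr_mono2) auto
    ultimately show "A powr (1 + e) \<le> Q" by simp
  qed simp
  finally have "real n * \<kappa>^2 * (A * t) \<le> real n * \<kappa>^2 * (Q / M powr (1 / \<alpha>))"
    by (intro mult_left_mono) auto
  also have "\<dots> = 3 / 2 powr (2 * \<alpha> + 4 + 1 / \<alpha>)"
    unfolding Q_def using M \<kappa> n by (simp add: field_simps)
  also have "\<dots> \<le> 3 / 2 powr 4" using \<alpha> by (intro divide_left_mono powr_mono) auto
  finally show "real n * \<kappa>^2 * (A * t) \<le> 3/16" by simp
qed

text \<open>With \<open>t\<close> as above take \<open>m = \<lfloor>1 / (2 * t)\<rfloor>\<close>, so that \<open>1 / (4 * t) < m \<le> 1 / (2 * t)\<close>: the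
  upper bound gives the Hoelder condition for tents of height \<open>sqrt A\<close>, the lower one the bound on
  the total Hellinger cost.\<close>
lemma cube_dimension_exists:
  fixes M A \<kappa> \<alpha> :: real and n :: nat
  assumes M: "0 < M" and \<alpha>: "0 < \<alpha>" "\<alpha> \<le> 1" and "0 < n" and A: "0 < A"
    and "A \<le> (3 * M powr (1 / \<alpha>) / (2 powr (2 * \<alpha> + 4 + 1 / \<alpha>) * \<kappa>^2 * real n))
                        powr (2 * \<alpha> / (1 + 2 * \<alpha>))"
    and "A \<le> M^2 / 4"
  shows "\<exists>m::nat. 0 < m \<and> sqrt A * (2 * real m) powr \<alpha> \<le> M \<and>
           real n * (\<kappa>^2 * (A / (3 * real m))) \<le> 1/4"
proof -
  define t where "t = (A / M^2) powr (1 / (2 * \<alpha>))"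
  note t = cube_scale_bounds[OF assms, folded t_def]
  define y where "y = 1 / (2 * t)"
  define m where "m = nat \<lfloor>y\<rfloor>"
  have "1 \<le> y" unfolding y_def using t(1,2) by (simp add: field_simps)
  then have "1 \<le> \<lfloor>y\<rfloor>" "real m = of_int \<lfloor>y\<rfloor>" unfolding m_def by auto
  then have m1: "1 \<le> m" and "real m \<le> y" "y < 2 * real m"
    by linarith+
  moreover have "0 < real m" using m1 by simp
  ultimately have m: "2 * real m \<le> 1 / t" "1 / real m \<le> 4 * t"
    using t(1) unfolding y_def by (simp_all add: field_simps)
  have "sqrt A * (2 * real m) powr \<alpha> \<le> sqrt A * (1 / t) powr \<alpha>"
    using m(1) \<alpha> A by (intro mult_left_mono powr_mono2) auto
  also have "\<dots> = M" using t(1,3) A M by (simp add: powr_divide)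
  finally have holder: "sqrt A * (2 * real m) powr \<alpha> \<le> M" .
  have "real n * \<kappa>^2 * A * (1 / real m) \<le> real n * \<kappa>^2 * A * (4 * t)"
    using A m(2) by (intro mult_left_mono) auto
  then have "real n * (\<kappa>^2 * (A / (3 * real m))) \<le> 4 / 3 * (real n * \<kappa>^2 * (A * t))"
    by simp
  then have "real n * (\<kappa>^2 * (A / (3 * real m))) \<le> 1/4"
    using t(4) by linarith
  then show ?thesis using m1 holder by (intro exI[of _ m]) auto
qed

section \<open>The cube of alternatives\<close>

lemma prob_space_PW: "prob_space PW"
  unfolding PW_def by (rule prob_space_uniform_measure) auto

lemma sets_PW[simp, measurable_cong]: "sets PW = sets borel"
  unfolding PW_def by simp

lemma nn_integral_PW:
  assumes [measurable]: "f \<in> borel_measurable borel"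
  shows "(\<integral>\<^sup>+ w. f w \<partial>PW) = (\<integral>\<^sup>+ w. f w * indicator {0..1} w \<partial>lborel)"
  unfolding PW_def by (subst nn_integral_uniform_measure) (auto simp: divide_ennreal_def)

locale assouad_setting = exp_family \<nu> S I for \<nu> :: "'y measure" and S I +
  fixes J :: "real set" and u :: "real \<Rightarrow> real" and a b cK \<kappa> :: real
  assumes J_interval: "is_interval J" and u_continuous: "continuous_on J u" and u_range: "u ` J \<subseteq> I"
    and hR_upper: "\<forall>g\<in>J. \<forall>g'\<in>J. hR \<nu> S u g g' \<le> \<kappa> * \<bar>g - g'\<bar>"
    and K_subset: "{a..b} \<subseteq> J" and a_le_b: "a \<le> b" and cK_nonneg: "0 \<le> cK"
    and hR_lower: "\<forall>g\<in>{a..b}. \<forall>g'\<in>{a..b}. cK * \<bar>g - g'\<bar> \<le> hR \<nu> S u g g'"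
begin

lemma a_in_J: "a \<in> J"
  using K_subset a_le_b by auto

text \<open>Extending \<open>u\<close> by a constant outside \<open>J\<close> makes the Hellinger distance a measurable function on
  the whole plane; estimators are only required to take values in \<open>J\<close> on \<open>[0,1]\<close>.\<close>
definition u_ext :: "real \<Rightarrow> real" where
  "u_ext t = (if t \<in> J then u t else u a)"

lemma borel_measurable_u_ext[measurable]: "u_ext \<in> borel_measurable borel"
  unfolding u_ext_def
  by (rule borel_measurable_continuous_on_if)
     (auto intro: real_interval_borel_measurable J_interval u_continuous continuous_on_const)

lemma u_ext_in_I: "u_ext t \<in> I"
  using u_range a_in_J unfolding u_ext_def by auto

definition hsq :: "real \<Rightarrow> real \<Rightarrow> real" where
  "hsq s t = (hellinger \<nu> (expdens \<nu> S (u_ext s)) (expdens \<nu> S (u_ext t)))^2"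

lemma borel_measurable_hsq[measurable (raw)]:
  assumes "f \<in> borel_measurable M" "g \<in> borel_measurable M"
  shows "(\<lambda>x. hsq (f x) (g x)) \<in> borel_measurable M"
proof -
  have "(\<lambda>x. (u_ext (f x), u_ext (g x))) \<in> M \<rightarrow>\<^sub>M borel \<Otimes>\<^sub>M borel"
    using assms by measurable
  from measurable_compose[OF this borel_measurable_hellinger_sq_pair] show ?thesis
    unfolding hsq_def by simp
qed

lemma hsq_nonneg: "0 \<le> hsq s t"
  unfolding hsq_def by simp

lemma hsq_eq_hR_sq: "s \<in> J \<Longrightarrow> t \<in> J \<Longrightarrow> hsq s t = (hR \<nu> S u s t)^2"
  unfolding hsq_def hR_def u_ext_def by simp

lemma hsq_quasi_triangle: "hsq s s' / 2 \<le> hsq s t + hsq s' t"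
  unfolding hsq_def by (intro hellinger_sq_expdens_quasi_triangle u_ext_in_I)

lemma hsq_eq_one_minus_affinity:
  "hsq s t = 1 - (\<integral>y. sqrt (expdens \<nu> S (u_ext s) y * expdens \<nu> S (u_ext t) y) \<partial>\<nu>)"
  unfolding hsq_def by (intro hellinger_sq_expdens_eq_one_minus_affinity u_ext_in_I)

end

locale hypercube = assouad_setting +
  fixes m :: nat and H :: real and n :: nat
  assumes m_pos: "0 < m" and H_nonneg: "0 \<le> H" and H_le: "H \<le> b - a"
begin

interpretation N: sigma_finite_measure \<nu> by (rule sigma_finite)
interpretation PW: prob_space PW by (rule prob_space_PW)

definition cube_fun :: "nat set \<Rightarrow> real \<Rightarrow> real" where
  "cube_fun \<omega> w = a + bumps m H \<omega> w"

definition cell :: "nat \<Rightarrow> real set" where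
  "cell j = {w. \<lfloor>real m * w\<rfloor> = int j}"

abbreviation bump :: "real \<Rightarrow> real" where
  "bump w \<equiv> 2 * H * tent (real m * w)"

text \<open>Upper bound, via the Lipschitz bound \<open>\<kappa>\<close>, on the squared Hellinger distance per observation
  between two alternatives differing in one coordinate: \<open>\<kappa>\<^sup>2\<close> times the \<open>L\<^sup>2\<close> mass of one tent.\<close>
abbreviation flip_cost :: real where
  "flip_cost \<equiv> \<kappa>^2 * (H^2 / (3 * real m))"

lemma borel_measurable_cube_fun[measurable]: "cube_fun \<omega> \<in> borel_measurable borel"
  unfolding cube_fun_def bumps_def by measurable

lemma cell_measurable[measurable]: "cell j \<in> sets borel"
  unfolding cell_def by measurable

lemma bump_nonneg: "0 \<le> bump w"
  using H_nonneg tent_nonneg by simp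

lemma bump_le: "bump w \<le> H"
  using mult_left_mono[OF tent_le_half[of "real m * w"] H_nonneg] by simp

lemma cube_fun_in_K: "cube_fun \<omega> w \<in> {a..b}"
  using bumps_nonneg[OF H_nonneg, of m \<omega> w] bumps_le[OF H_nonneg, of m \<omega> w] H_le
  unfolding cube_fun_def by simp

lemma cube_fun_in_J: "cube_fun \<omega> w \<in> J"
  using cube_fun_in_K K_subset by auto

lemma cube_fun_in_holder_class:
  assumes "0 < \<alpha>" "\<alpha> \<le> 1" "H * (2 * real m) powr \<alpha> \<le> M"
  shows "cube_fun \<omega> \<in> holder_class \<alpha> M J"
  unfolding holder_class_def cube_fun_def
  using cube_fun_in_J bumps_holder[OF H_nonneg _ assms] m_pos by (auto simp: cube_fun_def)

lemma cell_subset_unit: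
  assumes "j < m" "w \<in> cell j" shows "w \<in> {0..1}"
proof -
  have "real j \<le> real m * w" "real m * w < real j + 1"
    using assms(2) unfolding cell_def by (simp_all add: floor_eq_iff)
  moreover have "real j + 1 \<le> real m" using assms(1) by simp
  ultimately have mw: "0 \<le> real m * w" "real m * w < real m * 1" by linarith+
  have m: "0 < real m" using m_pos by simp
  have "0 \<le> w" using mw(1) m by (simp add: zero_le_mult_iff)
  moreover have "w < 1" using mw(2) m mult_less_cancel_left_pos by blast
  ultimately show ?thesis by simp
qed

lemma cube_fun_on_cell:
  assumes "w \<in> cell j" shows "cube_fun \<omega> w = a + (if j \<in> \<omega> then bump w else 0)"
  using assms unfolding cube_fun_def bumps_def cell_def by auto

lemma cube_fun_flip_diff_sq:
  assumes "j \<notin> \<omega>"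
  shows "(cube_fun \<omega> w - cube_fun (insert j \<omega>) w)^2 = indicator (cell j) w * (bump w)^2"
  using assms unfolding cube_fun_def bumps_def cell_def by (auto simp: indicator_def)

lemma nn_integral_PW_cell_bump_sq:
  assumes "j < m" "0 \<le> c"
  shows "(\<integral>\<^sup>+ w. ennreal (c * (indicator (cell j) w * (bump w)^2)) \<partial>PW) = ennreal (c * (H^2 / (3 * real m)))"
proof -
  have "(\<integral>\<^sup>+ w. ennreal (c * (indicator (cell j) w * (bump w)^2)) \<partial>PW)
      = (\<integral>\<^sup>+ w. ennreal c * ennreal (indicator (cell j) w * (bump w)^2) \<partial>lborel)"
    using cell_subset_unit[OF assms(1)] assms(2)
    by (subst nn_integral_PW) (auto simp: indicator_def ennreal_mult intro!: nn_integral_cong)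
  also have "\<dots> = ennreal c * ennreal (H^2 / (3 * real m))"
    unfolding cell_def using m_pos
    by (subst nn_integral_cmult) (simp_all add: nn_integral_tent_sq_cell)
  finally show ?thesis using assms(2) by (simp add: ennreal_mult'[symmetric])
qed

abbreviation obs_base where
  "obs_base \<equiv> PW \<Otimes>\<^sub>M \<nu>"

abbreviation sample_base where
  "sample_base \<equiv> PiM {..<n} (\<lambda>_. obs_base)"

lemma sigma_finite_obs_base: "sigma_finite_measure obs_base"
  using sigma_finite_pair_measure prob_space_PW prob_space_imp_sigma_finite sigma_finite by blast

interpretation PB: product_sigma_finite "\<lambda>_. obs_base"
  unfolding product_sigma_finite_def using sigma_finite_obs_base by blast

definition obs_density :: "nat set \<Rightarrow> real \<times> _ \<Rightarrow> real" where
  "obs_density \<omega> z = expdens \<nu> S (u_ext (cube_fun \<omega> (fst z))) (snd z)"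

definition sample_density :: "nat set \<Rightarrow> (nat \<Rightarrow> real \<times> _) \<Rightarrow> real" where
  "sample_density \<omega> x = (\<Prod>i<n. obs_density \<omega> (x i))"

lemma borel_measurable_obs_density[measurable]: "obs_density \<omega> \<in> borel_measurable obs_base"
  using measurable_compose[OF _ borel_measurable_expdens_pair,
      of "\<lambda>z. (u_ext (cube_fun \<omega> (fst z)), snd z)"]
  unfolding obs_density_def by simp

lemma borel_measurable_sample_density[measurable]: "sample_density \<omega> \<in> borel_measurable sample_base"
  unfolding sample_density_def by measurable

lemma obs_density_nonneg: "0 \<le> obs_density \<omega> z"
  unfolding obs_density_def by (rule less_imp_le[OF expdens_pos])

lemma sample_density_nonneg: "0 \<le> sample_density \<omega> x"
  unfolding sample_density_def by (intro prod_nonneg obs_density_nonneg)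

lemma nn_integral_obs_density: "(\<integral>\<^sup>+ z. ennreal (obs_density \<omega> z) \<partial>obs_base) = 1"
proof -
  have "(\<integral>\<^sup>+ y. ennreal (obs_density \<omega> (w, y)) \<partial>\<nu>) = 1" for w
    unfolding obs_density_def by (simp add: nn_integral_expdens u_ext_in_I)
  then have "(\<integral>\<^sup>+ z. ennreal (obs_density \<omega> z) \<partial>obs_base) = (\<integral>\<^sup>+ w. 1 \<partial>PW)"
    by (subst N.nn_integral_fst[symmetric]) simp_all
  then show ?thesis using PW.emeasure_space_1 by simp
qed

lemma nn_integral_sample_density: "(\<integral>\<^sup>+ x. ennreal (sample_density \<omega> x) \<partial>sample_base) = 1"
proof -
  have "(\<integral>\<^sup>+ x. ennreal (sample_density \<omega> x) \<partial>sample_base)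
      = (\<integral>\<^sup>+ x. (\<Prod>i<n. ennreal (obs_density \<omega> (x i))) \<partial>sample_base)"
    unfolding sample_density_def by (simp add: prod_ennreal obs_density_nonneg)
  also have "\<dots> = (\<Prod>i<n. \<integral>\<^sup>+ z. ennreal (obs_density \<omega> z) \<partial>obs_base)"
    by (rule PB.product_nn_integral_prod) auto
  finally show ?thesis by (simp add: nn_integral_obs_density)
qed

lemma sample_dist_eq: "sample_dist n \<nu> S u (cube_fun \<omega>) = density sample_base (\<lambda>x. ennreal (sample_density \<omega> x))"
proof -
  have obs: "obs_dist \<nu> S u (cube_fun \<omega>) = density obs_base (\<lambda>z. ennreal (obs_density \<omega> z))"
    unfolding obs_dist_def obs_density_def using cube_fun_in_J
    by (simp add: u_ext_def case_prod_beta')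
  have "emeasure (density obs_base (\<lambda>z. ennreal (obs_density \<omega> z))) (space obs_base)
      = (\<integral>\<^sup>+ z. ennreal (obs_density \<omega> z) \<partial>obs_base)"
    by (subst emeasure_density[OF _ sets.top]) (auto intro!: nn_integral_cong)
  then have "prob_space (density obs_base (\<lambda>z. ennreal (obs_density \<omega> z)))"
    by (intro prob_spaceI) (simp add: nn_integral_obs_density)
  then have "sample_dist n \<nu> S u (cube_fun \<omega>)
      = density sample_base (\<lambda>x. \<Prod>i<n. ennreal (obs_density \<omega> (x i)))"
    unfolding sample_dist_def obs by (intro PiM_density sigma_finite_obs_base) auto
  also have "\<dots> = density sample_base (\<lambda>x. ennreal (sample_density \<omega> x))"
    unfolding sample_density_def by (simp add: prod_ennreal obs_density_nonneg)
  finally show ?thesis .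
qed

lemma obs_affinity_flip_ge:
  assumes "j < m" "j \<notin> \<omega>"
  shows "ennreal (1 - flip_cost) \<le> (\<integral>\<^sup>+ z. ennreal (sqrt (obs_density \<omega> z * obs_density (insert j \<omega>) z)) \<partial>obs_base)"
proof -
  define z where "z w = \<kappa>^2 * (indicator (cell j) w * (bump w)^2)" for w
  have [measurable]: "z \<in> borel_measurable borel"
    unfolding z_def by measurable
  have slice: "ennreal (1 - z w) \<le> (\<integral>\<^sup>+ y. ennreal (sqrt (obs_density \<omega> (w, y) * obs_density (insert j \<omega>) (w, y))) \<partial>\<nu>)" for w
  proof -
    let ?s = "cube_fun \<omega> w" and ?t = "cube_fun (insert j \<omega>) w"
    have "(\<integral>\<^sup>+ y. ennreal (sqrt (obs_density \<omega> (w, y) * obs_density (insert j \<omega>) (w, y))) \<partial>\<nu>)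
        = ennreal (1 - hsq ?s ?t)"
      unfolding obs_density_def hsq_eq_one_minus_affinity
      by (simp add: nn_integral_eq_integral integrable_sqrt_mult integrable_expdens u_ext_in_I
          less_imp_le[OF expdens_pos])
    moreover have "hR \<nu> S u ?s ?t \<le> \<kappa> * \<bar>?s - ?t\<bar>" "0 \<le> hR \<nu> S u ?s ?t"
      using hR_upper cube_fun_in_J unfolding hR_def hellinger_def by auto
    then have "(hR \<nu> S u ?s ?t)^2 \<le> (\<kappa> * \<bar>?s - ?t\<bar>)^2"
      by (intro power_mono) auto
    then have "hsq ?s ?t \<le> z w"
      using hsq_eq_hR_sq[OF cube_fun_in_J cube_fun_in_J] cube_fun_flip_diff_sq[OF assms(2)]
      unfolding z_def by (simp add: power_mult_distrib)
    ultimately show ?thesis by (simp add: ennreal_leI)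
  qed
  have "ennreal (1 - flip_cost) \<le> (\<integral>\<^sup>+ w. ennreal (1 - z w) \<partial>PW)"
  proof (rule PW.one_minus_le_nn_integral)
    show "(\<integral>\<^sup>+ w. ennreal (z w) \<partial>PW) = ennreal flip_cost"
      using nn_integral_PW_cell_bump_sq[OF assms(1), of "\<kappa>^2"] unfolding z_def by simp
  qed (auto simp: z_def)
  also have "\<dots> \<le> (\<integral>\<^sup>+ w. \<integral>\<^sup>+ y. ennreal (sqrt (obs_density \<omega> (w, y) * obs_density (insert j \<omega>) (w, y))) \<partial>\<nu> \<partial>PW)"
    by (intro nn_integral_mono slice)
  also have "\<dots> = (\<integral>\<^sup>+ z. ennreal (sqrt (obs_density \<omega> z * obs_density (insert j \<omega>) z)) \<partial>obs_base)"
    by (rule N.nn_integral_fst) measurable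
  finally show ?thesis .
qed

lemma sample_affinity_eq_power:
  "(\<integral>\<^sup>+ x. ennreal (sqrt (sample_density \<omega> x * sample_density \<omega>' x)) \<partial>sample_base)
    = (\<integral>\<^sup>+ z. ennreal (sqrt (obs_density \<omega> z * obs_density \<omega>' z)) \<partial>obs_base) ^ n"
proof -
  have "sqrt (sample_density \<omega> x * sample_density \<omega>' x) = (\<Prod>i<n. sqrt (obs_density \<omega> (x i) * obs_density \<omega>' (x i)))" for x
    unfolding sample_density_def prod.distrib[symmetric] by (induction n) (auto simp: real_sqrt_mult)
  then have "(\<integral>\<^sup>+ x. ennreal (sqrt (sample_density \<omega> x * sample_density \<omega>' x)) \<partial>sample_base)
      = (\<integral>\<^sup>+ x. (\<Prod>i<n. ennreal (sqrt (obs_density \<omega> (x i) * obs_density \<omega>' (x i)))) \<partial>sample_base)"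
    by (simp add: prod_ennreal obs_density_nonneg)
  also have "\<dots> = (\<Prod>i<n. \<integral>\<^sup>+ z. ennreal (sqrt (obs_density \<omega> z * obs_density \<omega>' z)) \<partial>obs_base)"
    by (rule PB.product_nn_integral_prod) auto
  finally show ?thesis by simp
qed

text \<open>Tensorisation of the affinity, Bernoulli's inequality and Le Cam's inequality.\<close>
lemma sample_overlap_flip_ge:
  assumes "j < m" "j \<notin> \<omega>" and "flip_cost \<le> 1" "real n * flip_cost \<le> 1"
  shows "ennreal ((1 - real n * flip_cost)^2 / 2)
    \<le> (\<integral>\<^sup>+ x. ennreal (min (sample_density \<omega> x) (sample_density (insert j \<omega>) x)) \<partial>sample_base)"
proof -
  define \<rho> where "\<rho> = (\<integral>\<^sup>+ x. ennreal (sqrt (sample_density \<omega> x * sample_density (insert j \<omega>) x)) \<partial>sample_base)"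
  have "1 - real n * flip_cost \<le> (1 - flip_cost) ^ n"
    using Bernoulli_inequality[of "- flip_cost" n] assms(3) by simp
  then have "ennreal (1 - real n * flip_cost) \<le> ennreal (1 - flip_cost) ^ n"
    using assms(3) by (simp add: ennreal_power ennreal_leI)
  also have "\<dots> \<le> \<rho>"
    unfolding \<rho>_def sample_affinity_eq_power by (intro power_mono obs_affinity_flip_ge assms(1,2)) simp
  finally have "ennreal (1 - real n * flip_cost) ^ 2 \<le> \<rho> ^ 2"
    by (intro power_mono) simp_all
  also have "\<dots> \<le> 2 * (\<integral>\<^sup>+ x. ennreal (min (sample_density \<omega> x) (sample_density (insert j \<omega>) x)) \<partial>sample_base)"
    unfolding \<rho>_def
    by (rule affinity_sq_le_twice_overlap) (auto simp: nn_integral_sample_density sample_density_nonneg)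
  finally have overlap: "ennreal (1 - real n * flip_cost) ^ 2
      \<le> 2 * (\<integral>\<^sup>+ x. ennreal (min (sample_density \<omega> x) (sample_density (insert j \<omega>) x)) \<partial>sample_base)" .
  have half: "ennreal (1 - real n * flip_cost) ^ 2 = 2 * ennreal ((1 - real n * flip_cost)^2 / 2)"
    using assms(4) ennreal_mult[of 2 "(1 - real n * flip_cost)^2 / 2"] by (simp add: ennreal_power)
  have "2 * ennreal ((1 - real n * flip_cost)^2 / 2)
      \<le> 2 * (\<integral>\<^sup>+ x. ennreal (min (sample_density \<omega> x) (sample_density (insert j \<omega>) x)) \<partial>sample_base)"
    using overlap unfolding half .
  then show ?thesis
    by (rule ennreal_mult_le_mult_iff[THEN iffD1, rotated 2]) simp_all
qed

end

section \<open>Lower bound for an arbitrary estimator\<close>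

locale hypercube_estimator = hypercube +
  fixes \<gamma>t
  assumes estimator: "\<gamma>t \<in> estimators n \<nu> J"
begin

interpretation PW: prob_space PW by (rule prob_space_PW)

lemma sets_sample_base: "sets sample_base = sets (PiM {..<n} (\<lambda>_. borel \<Otimes>\<^sub>M \<nu>))"
  by (intro sets_PiM_cong sets_pair_measure_cong) auto

lemma estimator_in_J: "x \<in> space sample_base \<Longrightarrow> w \<in> {0..1} \<Longrightarrow> \<gamma>t x w \<in> J"
  using estimator sets_eq_imp_space_eq[OF sets_sample_base] unfolding estimators_def by auto

definition est_ext :: "(nat \<Rightarrow> real \<times> _) \<Rightarrow> real \<Rightarrow> real" where
  "est_ext x w = (if \<gamma>t x w \<in> J then \<gamma>t x w else a)"

lemma borel_measurable_est_ext[measurable]: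
  "(\<lambda>xw. est_ext (fst xw) (snd xw)) \<in> borel_measurable (sample_base \<Otimes>\<^sub>M PW)"
proof -
  have "sets (sample_base \<Otimes>\<^sub>M PW) = sets (PiM {..<n} (\<lambda>_. borel \<Otimes>\<^sub>M \<nu>) \<Otimes>\<^sub>M borel)"
    by (rule sets_pair_measure_cong[OF sets_sample_base]) simp
  then have [measurable]: "(\<lambda>xw. \<gamma>t (fst xw) (snd xw)) \<in> borel_measurable (sample_base \<Otimes>\<^sub>M PW)"
    using estimator unfolding estimators_def by (simp add: case_prod_beta' cong: measurable_cong_sets)
  have [measurable]: "J \<in> sets borel"
    by (rule real_interval_borel_measurable[OF J_interval])
  show ?thesis unfolding est_ext_def by measurable
qed

definition cell_integrand :: "nat \<Rightarrow> bool \<Rightarrow> (nat \<Rightarrow> real \<times> _) \<Rightarrow> real \<Rightarrow> ennreal" where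
  "cell_integrand j flip x w =
     ennreal (indicator (cell j) w * hsq (a + (if flip then bump w else 0)) (est_ext x w))"

definition cell_loss :: "nat \<Rightarrow> bool \<Rightarrow> (nat \<Rightarrow> real \<times> _) \<Rightarrow> ennreal" where
  "cell_loss j flip x = (\<integral>\<^sup>+ w. cell_integrand j flip x w \<partial>PW)"

lemma borel_measurable_cell_integrand[measurable]:
  "(\<lambda>xw. cell_integrand j flip (fst xw) (snd xw)) \<in> borel_measurable (sample_base \<Otimes>\<^sub>M PW)"
  unfolding cell_integrand_def by measurable

lemma borel_measurable_cell_integrand_slice:
  "x \<in> space sample_base \<Longrightarrow> cell_integrand j flip x \<in> borel_measurable PW"
  using measurable_Pair2[OF borel_measurable_cell_integrand] by simp

lemma borel_measurable_cell_loss[measurable]: "cell_loss j flip \<in> borel_measurable sample_base"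
  unfolding cell_loss_def
  using borel_measurable_cell_integrand
  by (intro sigma_finite_measure.borel_measurable_nn_integral prob_space_imp_sigma_finite prob_space_PW)
     (simp add: case_prod_beta')

text \<open>The cells are disjoint, and on cell \<open>j\<close> the alternative \<open>cube_fun \<omega>\<close> carries the tent iff
  \<open>j \<in> \<omega>\<close>.\<close>
lemma sum_cell_integrand_le:
  assumes "x \<in> space sample_base"
  shows "(\<Sum>j<m. cell_integrand j (j \<in> \<omega>) x w) \<le> ennreal ((hR \<nu> S u (cube_fun \<omega> w) (\<gamma>t x w))^2)"
proof (cases "\<exists>j0<m. w \<in> cell j0")
  case True
  then obtain j0 where j0: "j0 < m" "w \<in> cell j0" by auto
  then have "w \<notin> cell j" if "j \<noteq> j0" for j
    using that unfolding cell_def by auto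
  then have "(\<Sum>j<m. cell_integrand j (j \<in> \<omega>) x w) = cell_integrand j0 (j0 \<in> \<omega>) x w"
    using j0 by (intro sum.remove[THEN trans] add_0_right[THEN trans] sum.neutral) (auto simp: cell_integrand_def)
  also have "\<dots> = ennreal ((hR \<nu> S u (cube_fun \<omega> w) (\<gamma>t x w))^2)"
    using j0 estimator_in_J[OF assms cell_subset_unit[OF j0]]
    by (simp add: cell_integrand_def est_ext_def cube_fun_on_cell[symmetric] hsq_eq_hR_sq cube_fun_in_J)
  finally show ?thesis by simp
qed (simp add: cell_integrand_def)

lemma sum_cell_loss_le_risk:
  "(\<Sum>j<m. \<integral>\<^sup>+ x. ennreal (sample_density \<omega> x) * cell_loss j (j \<in> \<omega>) x \<partial>sample_base)
    \<le> risk n \<nu> S u (cube_fun \<omega>) \<gamma>t"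
proof -
  have "(\<Sum>j<m. \<integral>\<^sup>+ x. ennreal (sample_density \<omega> x) * cell_loss j (j \<in> \<omega>) x \<partial>sample_base)
      = (\<integral>\<^sup>+ x. (\<Sum>j<m. cell_loss j (j \<in> \<omega>) x) \<partial>density sample_base (\<lambda>x. ennreal (sample_density \<omega> x)))"
    by (simp add: nn_integral_sum[symmetric] nn_integral_density sum_distrib_left)
  also have "\<dots> \<le> (\<integral>\<^sup>+ x. (\<integral>\<^sup>+ w. ennreal ((hR \<nu> S u (cube_fun \<omega> w) (\<gamma>t x w))^2) \<partial>PW)
      \<partial>density sample_base (\<lambda>x. ennreal (sample_density \<omega> x)))"
  proof (rule nn_integral_mono)
    fix x assume "x \<in> space (density sample_base (\<lambda>x. ennreal (sample_density \<omega> x)))"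
    then have x: "x \<in> space sample_base" by simp
    have "(\<Sum>j<m. cell_loss j (j \<in> \<omega>) x) = (\<integral>\<^sup>+ w. (\<Sum>j<m. cell_integrand j (j \<in> \<omega>) x w) \<partial>PW)"
      unfolding cell_loss_def using borel_measurable_cell_integrand_slice[OF x]
      by (simp add: nn_integral_sum)
    also have "\<dots> \<le> (\<integral>\<^sup>+ w. ennreal ((hR \<nu> S u (cube_fun \<omega> w) (\<gamma>t x w))^2) \<partial>PW)"
      by (intro nn_integral_mono sum_cell_integrand_le[OF x])
    finally show "(\<Sum>j<m. cell_loss j (j \<in> \<omega>) x) \<le> \<dots>" .
  qed
  also have "\<dots> = risk n \<nu> S u (cube_fun \<omega>) \<gamma>t"
    unfolding risk_def sample_dist_eq ..
  finally show ?thesis .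
qed

text \<open>Quasi-triangle inequality for \<open>hsq\<close> through the estimate, together with the lower Hellinger
  bound on \<open>K\<close>.\<close>
lemma cell_loss_pair_ge:
  assumes "j < m" "x \<in> space sample_base"
  shows "ennreal (cK^2 / 2 * (H^2 / (3 * real m))) \<le> cell_loss j False x + cell_loss j True x"
proof -
  have "ennreal (cK^2 / 2 * (H^2 / (3 * real m)))
      = (\<integral>\<^sup>+ w. ennreal (cK^2 / 2 * (indicator (cell j) w * (bump w)^2)) \<partial>PW)"
    by (rule nn_integral_PW_cell_bump_sq[OF assms(1), symmetric]) simp
  also have "\<dots> \<le> (\<integral>\<^sup>+ w. cell_integrand j False x w + cell_integrand j True x w \<partial>PW)"
  proof (rule nn_integral_mono)
    fix w
    let ?t = "est_ext x w"
    have K: "a \<in> {a..b}" "a + bump w \<in> {a..b}"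
      using bump_nonneg[of w] bump_le[of w] H_le a_le_b by auto
    then have "cK * \<bar>a - (a + bump w)\<bar> \<le> hR \<nu> S u a (a + bump w)"
      using hR_lower by blast
    then have "(cK * bump w)^2 \<le> (hR \<nu> S u a (a + bump w))^2"
      using cK_nonneg bump_nonneg[of w] by (intro power_mono) auto
    also have "\<dots> = hsq a (a + bump w)"
      using K K_subset by (intro hsq_eq_hR_sq[symmetric]) auto
    also have "\<dots> \<le> 2 * (hsq a ?t + hsq (a + bump w) ?t)"
      using hsq_quasi_triangle[of a "a + bump w" ?t] by simp
    finally have "cK^2 * (bump w)^2 \<le> 2 * (hsq a ?t + hsq (a + bump w) ?t)"
      by (simp add: power_mult_distrib)
    then have "cK^2 / 2 * (bump w)^2 \<le> hsq a ?t + hsq (a + bump w) ?t"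
      by (simp add: field_simps)
    then have "cK^2 / 2 * (indicator (cell j) w * (bump w)^2)
        \<le> indicator (cell j) w * hsq a ?t + indicator (cell j) w * hsq (a + bump w) ?t"
      by (cases "w \<in> cell j") simp_all
    then show "ennreal (cK^2 / 2 * (indicator (cell j) w * (bump w)^2))
        \<le> cell_integrand j False x w + cell_integrand j True x w"
      unfolding cell_integrand_def using hsq_nonneg by (simp add: ennreal_plus[symmetric] ennreal_leI del: ennreal_plus)
  qed
  also have "\<dots> = cell_loss j False x + cell_loss j True x"
    unfolding cell_loss_def
    by (intro nn_integral_add borel_measurable_cell_integrand_slice assms(2))
  finally show ?thesis .
qed

lemma flip_pair_loss_ge:
  assumes "j < m" "j \<notin> \<omega>" and "flip_cost \<le> 1" "real n * flip_cost \<le> 1"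
  shows "ennreal (cK^2 / 2 * (H^2 / (3 * real m))) * ennreal ((1 - real n * flip_cost)^2 / 2)
    \<le> (\<integral>\<^sup>+ x. ennreal (sample_density \<omega> x) * cell_loss j False x \<partial>sample_base)
      + (\<integral>\<^sup>+ x. ennreal (sample_density (insert j \<omega>) x) * cell_loss j True x \<partial>sample_base)"
proof -
  let ?D = "ennreal (cK^2 / 2 * (H^2 / (3 * real m)))"
  let ?min = "\<lambda>x. ennreal (min (sample_density \<omega> x) (sample_density (insert j \<omega>) x))"
  have "?D * ennreal ((1 - real n * flip_cost)^2 / 2) \<le> ?D * (\<integral>\<^sup>+ x. ?min x \<partial>sample_base)"
    by (intro mult_left_mono sample_overlap_flip_ge assms) simp
  also have "\<dots> = (\<integral>\<^sup>+ x. ?D * ?min x \<partial>sample_base)"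
    by (rule nn_integral_cmult[symmetric]) measurable
  also have "\<dots> \<le> (\<integral>\<^sup>+ x. ennreal (sample_density \<omega> x) * cell_loss j False x
      + ennreal (sample_density (insert j \<omega>) x) * cell_loss j True x \<partial>sample_base)"
  proof (rule nn_integral_mono)
    fix x assume x: "x \<in> space sample_base"
    have "?D * ?min x \<le> (cell_loss j False x + cell_loss j True x) * ?min x"
      by (intro mult_right_mono cell_loss_pair_ge assms(1) x) simp
    also have "\<dots> \<le> cell_loss j False x * ennreal (sample_density \<omega> x)
        + cell_loss j True x * ennreal (sample_density (insert j \<omega>) x)"
      unfolding distrib_right by (intro add_mono mult_left_mono ennreal_leI) auto
    finally show "?D * ?min x \<le> ennreal (sample_density \<omega> x) * cell_loss j False x
        + ennreal (sample_density (insert j \<omega>) x) * cell_loss j True x"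
      by (simp add: mult.commute)
  qed
  also have "\<dots> = (\<integral>\<^sup>+ x. ennreal (sample_density \<omega> x) * cell_loss j False x \<partial>sample_base)
      + (\<integral>\<^sup>+ x. ennreal (sample_density (insert j \<omega>) x) * cell_loss j True x \<partial>sample_base)"
    by (rule nn_integral_add) measurable
  finally show ?thesis .
qed

lemma sup_risk_ge:
  assumes "0 < \<alpha>" "\<alpha> \<le> 1" "H * (2 * real m) powr \<alpha> \<le> M"
    and "0 < n" "real n * flip_cost \<le> 1"
  shows "ennreal (cK^2 * H^2 * (1 - real n * flip_cost)^2 / 24)
    \<le> (SUP \<gamma>\<in>holder_class \<alpha> M J. risk n \<nu> S u \<gamma> \<gamma>t)"
proof -
  define V where "V = (SUP \<gamma>\<in>holder_class \<alpha> M J. risk n \<nu> S u \<gamma> \<gamma>t)"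
  define E where "E j \<omega> = (\<integral>\<^sup>+ x. ennreal (sample_density \<omega> x) * cell_loss j (j \<in> \<omega>) x \<partial>sample_base)"
    for j \<omega>
  define A where "A = cK^2 / 2 * (H^2 / (3 * real m))"
  define B where "B = (1 - real n * flip_cost)^2 / 2"
  define w where "w = cK^2 * H^2 * (1 - real n * flip_cost)^2 / 24"
  have "1 * flip_cost \<le> real n * flip_cost"
    using assms(4) by (intro mult_right_mono) auto
  then have "flip_cost \<le> 1"
    using assms(5) by simp
  then have "of_nat m * (ennreal A * ennreal B) \<le> 2 * V"
  proof (intro cube_averaging)
    fix j \<omega> assume "j < m" "\<omega> \<subseteq> {..<m} - {j}"
    then have "j \<notin> \<omega>" by auto
    then show "ennreal A * ennreal B \<le> E j \<omega> + E j (insert j \<omega>)"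
      unfolding A_def B_def E_def
      using flip_pair_loss_ge[OF \<open>j < m\<close> _ \<open>flip_cost \<le> 1\<close> assms(5)] by simp
  next
    fix \<omega> :: "nat set"
    have "(\<Sum>j<m. E j \<omega>) \<le> risk n \<nu> S u (cube_fun \<omega>) \<gamma>t"
      unfolding E_def by (rule sum_cell_loss_le_risk)
    also have "\<dots> \<le> V"
      unfolding V_def by (intro SUP_upper cube_fun_in_holder_class assms(1-3))
    finally show "(\<Sum>j<m. E j \<omega>) \<le> V" .
  qed
  moreover have "of_nat m * (ennreal A * ennreal B) = 2 * ennreal w"
  proof -
    have nonneg: "0 \<le> A" "0 \<le> B" "0 \<le> w"
      unfolding A_def B_def w_def by simp_all
    have "A * B * real m = 2 * w"
      unfolding A_def B_def w_def using m_pos by (simp add: field_simps)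
    then have "ennreal (A * B * real m) = ennreal (2 * w)" by simp
    then show ?thesis
      using nonneg by (simp add: ennreal_of_nat_eq_real_of_nat ennreal_mult mult_ac)
  qed
  ultimately have "2 * ennreal w \<le> 2 * V" by simp
  then show ?thesis
    unfolding V_def w_def by (rule ennreal_mult_le_mult_iff[THEN iffD1, rotated 2]) simp_all
qed

end

lemma (in hypercube) minimax_risk_ge:
  assumes "0 < \<alpha>" "\<alpha> \<le> 1" "H * (2 * real m) powr \<alpha> \<le> M"
    and "0 < n" "real n * flip_cost \<le> 1"
  shows "ennreal (cK^2 * H^2 * (1 - real n * flip_cost)^2 / 24) \<le> minimax_risk n \<nu> S u J \<alpha> M"
  unfolding minimax_risk_def
proof (rule INF_greatest)
  fix \<gamma>t assume "\<gamma>t \<in> estimators n \<nu> J"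
  then interpret hypercube_estimator \<nu> S I J u a b cK \<kappa> m H n \<gamma>t
    by unfold_locales
  show "ennreal (cK^2 * H^2 * (1 - real n * flip_cost)^2 / 24) \<le> (SUP \<gamma>\<in>holder_class \<alpha> M J. risk n \<nu> S u \<gamma> \<gamma>t)"
    by (rule sup_risk_ge[OF assms])
qed

lemma (in hypercube) minimax_risk_ge_quarter:
  assumes "0 < \<alpha>" "\<alpha> \<le> 1" "H * (2 * real m) powr \<alpha> \<le> M"
    and "0 < n" "real n * flip_cost \<le> 1/4"
  shows "ennreal (cK^2 / 48 * H^2) \<le> minimax_risk n \<nu> S u J \<alpha> M"
proof -
  define x where "x = real n * flip_cost"
  have "0 \<le> x" "x \<le> 1/4"
    using assms(5) unfolding x_def by simp_all
  then have "(3/4)^2 \<le> (1 - x)^2"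
    by (intro power_mono) simp_all
  then have "cK^2 * H^2 / 24 * (1/2) \<le> cK^2 * H^2 / 24 * (1 - x)^2"
    by (intro mult_left_mono) (simp_all add: power2_eq_square)
  then have "ennreal (cK^2 / 48 * H^2) \<le> ennreal (cK^2 * H^2 * (1 - x)^2 / 24)"
    by (intro ennreal_leI) simp
  also have "\<dots> \<le> minimax_risk n \<nu> S u J \<alpha> M"
    unfolding x_def using assms by (intro minimax_risk_ge) simp_all
  finally show ?thesis .
qed

theorem proposition3:
  fixes \<nu> :: "'y measure" and S :: "'y \<Rightarrow> real" and I J K :: "real set"
    and u :: "real \<Rightarrow> real" and \<kappa> cK L \<alpha> M :: real and n :: nat
  assumes "sigma_finite_measure \<nu>"
    and "S \<in> borel_measurable \<nu>"
    and "\<not> (\<exists>c. AE y in \<nu>. S y = c)"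
    and "is_interval I" and "interior I \<noteq> {}"
    and "\<forall>\<theta>\<in>I. integrable \<nu> (\<lambda>y. exp (\<theta> * S y))"
    and "is_interval J" and "interior J \<noteq> {}"
    and "continuous_on J u"
    and "strict_mono_on J u \<or> strict_mono_on J (\<lambda>x. - u x)"
    and "u ` J = I"
    and "\<kappa> > 0"
    and "\<forall>g\<in>J. \<forall>g'\<in>J. hR \<nu> S u g g' \<le> \<kappa> * \<bar>g - g'\<bar>"
    and "K = {a..b}" and "K \<subseteq> J" and "b - a = 2 * L" and "L > 0"
    and "cK > 0"
    and "\<forall>g\<in>K. \<forall>g'\<in>K. hR \<nu> S u g g' \<ge> cK * \<bar>g - g'\<bar>"
    and "0 < \<alpha>" and "\<alpha> \<le> 1" and "M > 0"
  shows "minimax_risk n \<nu> S u J \<alpha> M \<ge>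
    ennreal (cK\<^sup>2 / 48 *
      min ((3 * M powr (1 / \<alpha>) / (2 powr (2 * \<alpha> + 4 + 1 / \<alpha>) * \<kappa>\<^sup>2 * real n))
             powr (2 * \<alpha> / (1 + 2 * \<alpha>)))
          (min (M\<^sup>2 / 4) (L\<^sup>2)))"
proof (cases "n = 0")
  case False
  define A where "A = min ((3 * M powr (1 / \<alpha>) / (2 powr (2 * \<alpha> + 4 + 1 / \<alpha>) * \<kappa>\<^sup>2 * real n))
             powr (2 * \<alpha> / (1 + 2 * \<alpha>))) (min (M\<^sup>2 / 4) (L\<^sup>2))"
  have A_le: "A \<le> (3 * M powr (1 / \<alpha>) / (2 powr (2 * \<alpha> + 4 + 1 / \<alpha>) * \<kappa>\<^sup>2 * real n))
      powr (2 * \<alpha> / (1 + 2 * \<alpha>))" "A \<le> M^2 / 4" "A \<le> L^2"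
    unfolding A_def by simp_all
  then have "sqrt A \<le> L" using assms(17) real_le_lsqrt by fastforce
  then have A: "0 < A" "sqrt A \<le> b - a"
    using False assms(12,16,17,22) unfolding A_def by auto
  obtain m where m: "0 < m" "sqrt A * (2 * real m) powr \<alpha> \<le> M"
    "real n * (\<kappa>^2 * (A / (3 * real m))) \<le> 1/4"
    using cube_dimension_exists[OF assms(22,20,21) _ A(1) A_le(1,2)] False by blast
  interpret hypercube \<nu> S I J u a b cK \<kappa> m "sqrt A" n
    using sigma_finite_measure.sigma_finite_countable[OF assms(1)] assms A m(1)
    by unfold_locales auto
  have "ennreal (cK^2 / 48 * (sqrt A)^2) \<le> minimax_risk n \<nu> S u J \<alpha> M"
    using False m(3) A(1) by (intro minimax_risk_ge_quarter assms(20,21) m(2)) simp_all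
  then show ?thesis
    using A(1) unfolding A_def[symmetric] by simp
qed (simp \<comment> \<open>for \<open>n = 0\<close> the rate term is \<open>(x / 0) powr _ = 0\<close>\<close>)

end
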